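(* Let $(G,\sigma)$ be a finite connected signed graph and $p>1$. Then the first (smallest) nonzero eigenvalue $\lambda_p^\sigma$ of the signed $p$-Laplacian $\Delta_p^\sigma$ satisfies \[ \lambda_{p}^{\sigma}\geq\frac{1}{2}\left(\frac{2}{p\cdot \mathrm{vol}(G)}\right)^{p}, \] where $\mathrm{vol}(G)=\sum_{x\in V}d_x$.
   Context: $G=(V,E)$ is a finite simple connected graph with degrees $d_x$; $\sigma:E\to\{\pm1\}$, $\sigma_{xy}=\sigma(\{x,y\})$. For $p>1$, $\Delta_{p}^{\sigma}f(x)=\frac{1}{d_{x}}\sum_{y\sim x}|\sigma_{xy}f(y)-f(x)|^{p-2}(\sigma_{xy}f(y)-f(x))$ (with $|t|^{p-2}t=0$ at $t=0$). A real $\lambda$ is an eigenvalue of $\Delta_p^\sigma$ if there is a nonzero $f$ with $-\Delta_{p}^{\sigma}f(x)=\lambda|f(x)|^{p-2}f(x)$ for all $x\in V$. *)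

theory Defs
  imports Complex_Main
begin

definition simple_graph :: "'a set \<Rightarrow> 'a set set \<Rightarrow> bool" where
  "simple_graph V E \<longleftrightarrow> finite V \<and>
     (\<forall>e\<in>E. \<exists>x y. e = {x, y} \<and> x \<in> V \<and> y \<in> V \<and> x \<noteq> y)"

definition adj :: "'a set set \<Rightarrow> 'a \<Rightarrow> 'a \<Rightarrow> bool" where
  "adj E x y \<longleftrightarrow> {x, y} \<in> E"

definition neighbors :: "'a set \<Rightarrow> 'a set set \<Rightarrow> 'a \<Rightarrow> 'a set" where
  "neighbors V E x = {y \<in> V. adj E x y}"

definition degree :: "'a set \<Rightarrow> 'a set set \<Rightarrow> 'a \<Rightarrow> nat" where
  "degree V E x = card (neighbors V E x)"

definition connected_graph :: "'a set \<Rightarrow> 'a set set \<Rightarrow> bool" where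
  "connected_graph V E \<longleftrightarrow> V \<noteq> {} \<and>
     (\<forall>x\<in>V. \<forall>y\<in>V. (x, y) \<in> {(u, v). u \<in> V \<and> v \<in> V \<and> adj E u v}\<^sup>*)"

definition signature :: "'a set set \<Rightarrow> ('a set \<Rightarrow> real) \<Rightarrow> bool" where
  "signature E \<sigma> \<longleftrightarrow> (\<forall>e\<in>E. \<sigma> e = 1 \<or> \<sigma> e = -1)"

definition vol :: "'a set \<Rightarrow> 'a set set \<Rightarrow> real" where
  "vol V E = (\<Sum>x\<in>V. real (degree V E x))"

definition phi :: "real \<Rightarrow> real \<Rightarrow> real" where
  "phi p t = (if t = 0 then 0 else \<bar>t\<bar> powr (p - 2) * t)"

definition signed_p_laplacian ::
  "real \<Rightarrow> 'a set \<Rightarrow> 'a set set \<Rightarrow> ('a set \<Rightarrow> real) \<Rightarrow> ('a \<Rightarrow> real) \<Rightarrow> 'a \<Rightarrow> real" where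
  "signed_p_laplacian p V E \<sigma> f x =
     (1 / real (degree V E x)) * (\<Sum>y\<in>neighbors V E x. phi p (\<sigma> {x, y} * f y - f x))"

definition is_eigenvalue ::
  "real \<Rightarrow> 'a set \<Rightarrow> 'a set set \<Rightarrow> ('a set \<Rightarrow> real) \<Rightarrow> real \<Rightarrow> bool" where
  "is_eigenvalue p V E \<sigma> lam \<longleftrightarrow>
     (\<exists>f :: 'a \<Rightarrow> real. (\<exists>x\<in>V. f x \<noteq> 0) \<and>
        (\<forall>x\<in>V. - signed_p_laplacian p V E \<sigma> f x = lam * phi p (f x)))"

end

theory Submission
  imports Defs "HOL-Analysis.Convex"
begin

(*
  Testing the eigenvalue equation against a function g gives the weak form
    lam * (SUM x. d_x g(x) phi(f x)) = 1/2 * (SUM x~y. (sigma_xy g(y) - g(x)) phi(sigma_xy f(y) - f(x))).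
  For g = f this is the energy identity
    lam * (SUM x. d_x |f x|^p) = 1/2 * (SUM x~y. |sigma_xy f(y) - f(x)|^p).
  For g = sgn f it shows that some edge ab has sigma_ab f(a) f(b) <= 0: otherwise sgn f is
  sigma-balanced and the right-hand side vanishes, while the left-hand side does not.
  Along a simple path from a maximum point x0 of |f| that ends with such an edge, the differences
  |sigma_xy f(y) - f(x)| add up to at least |f x0|. The path has L <= vol/2 edges, each counted
  twice in the energy, so Jensen's inequality yields
    |f x0|^p <= L^(p-1) * lam * (SUM x. d_x |f x|^p) <= (vol/2)^(p-1) * lam * vol * |f x0|^p,
  i.e. lam >= 1/2 * (2/vol)^p, which is even stronger than the claim.
*)

lemma mult_phi_self: "t * phi p t = \<bar>t\<bar> powr p"
proof (cases "t = 0")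
  case False
  then have "\<bar>t\<bar> powr p = \<bar>t\<bar> powr (p - 2) * (t * t)"
    using powr_add[of "\<bar>t\<bar>" "p - 2" 2] by (simp add: powr_numeral power2_eq_square)
  then show ?thesis
    using False by (simp add: phi_def mult_ac)
qed (simp add: phi_def)

lemma sgn_mult_phi: "sgn t * phi p t = \<bar>t\<bar> powr (p - 1)"
proof (cases "t = 0")
  case False
  then have "\<bar>t\<bar> powr (p - 1) = \<bar>t\<bar> powr (p - 2) * \<bar>t\<bar>"
    using powr_add[of "\<bar>t\<bar>" "p - 2" 1] by simp
  then show ?thesis
    using False by (auto simp: phi_def sgn_if)
qed (simp add: phi_def)

lemma phi_minus: "phi p (- t) = - phi p t"
  by (simp add: phi_def)

lemma phi_eq_0_iff: "phi p t = 0 \<longleftrightarrow> t = 0"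
  by (simp add: phi_def)

lemma sum_powr_le_card_powr_sum:
  fixes t :: "'b \<Rightarrow> real"
  assumes "finite I" and nonneg: "\<And>i. i \<in> I \<Longrightarrow> 0 \<le> t i" and "1 \<le> p"
  shows "(\<Sum>i\<in>I. t i) powr p \<le> real (card I) powr (p - 1) * (\<Sum>i\<in>I. t i powr p)"
proof -
  \<comment> \<open>\<open>powr_convex\<close> only covers \<open>{0<..}\<close>, so Jensen is applied to the positive terms\<close>
  define J where "J = {i \<in> I. 0 < t i}"
  have "J \<subseteq> I" "finite J"
    using \<open>finite I\<close> by (auto simp: J_def)
  have zero_outside_J: "t i = 0" if "i \<in> I - J" for i
    using nonneg that by (force simp: J_def)
  have sum_J: "(\<Sum>i\<in>I. t i) = (\<Sum>i\<in>J. t i)" "(\<Sum>i\<in>I. t i powr p) = (\<Sum>i\<in>J. t i powr p)"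
    using \<open>J \<subseteq> I\<close> \<open>finite I\<close> zero_outside_J by (auto intro: sum.mono_neutral_right)
  show ?thesis
  proof (cases "J = {}")
    case False
    define n where "n = real (card J)"
    have "n > 0"
      using False \<open>finite J\<close> by (simp add: n_def card_gt_0_iff)
    have "(\<Sum>i\<in>J. (1 / n) *\<^sub>R t i) powr p \<le> (\<Sum>i\<in>J. 1 / n * t i powr p)"
      using \<open>n > 0\<close> by (intro convex_on_sum[OF \<open>finite J\<close> False powr_convex[OF \<open>1 \<le> p\<close>]])
        (auto simp: n_def J_def)
    then have "(\<Sum>i\<in>J. t i) powr p / n powr p \<le> (\<Sum>i\<in>J. t i powr p) / n"
      using \<open>n > 0\<close> by (simp add: sum_divide_distrib[symmetric] powr_divide sum_nonneg J_def)
    then have "(\<Sum>i\<in>J. t i) powr p \<le> n powr (p - 1) * (\<Sum>i\<in>J. t i powr p)"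
      using \<open>n > 0\<close> by (simp add: powr_diff field_simps)
    also have "\<dots> \<le> real (card I) powr (p - 1) * (\<Sum>i\<in>J. t i powr p)"
      using \<open>n > 0\<close> \<open>1 \<le> p\<close> card_mono[OF \<open>finite I\<close> \<open>J \<subseteq> I\<close>]
      by (intro mult_right_mono powr_mono2 sum_nonneg) (auto simp: n_def)
    finally show ?thesis
      by (simp add: sum_J)
  qed (simp add: sum_J)
qed

lemma rtrancl_imp_simple_path_to_set:
  assumes "(x, a) \<in> R\<^sup>*" and "a \<in> A"
  obtains w n where "w 0 = x" "w n \<in> A" "inj_on w {..n}"
    "\<And>i. i < n \<Longrightarrow> (w i, w (Suc i)) \<in> R" "\<And>i. i < n \<Longrightarrow> w i \<notin> A"
proof -
  have "\<exists>n w. w 0 = x \<and> w n \<in> A \<and> inj_on w {..n} \<and> (\<forall>i<n. (w i, w (Suc i)) \<in> R \<and> w i \<notin> A)"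
    using assms(1)
  proof (induction rule: converse_rtrancl_induct)
    case base
    show ?case
      using assms(2) by (intro exI[of _ 0] exI[of _ "\<lambda>_. a"]) auto
  next
    case (step x y)
    then obtain n w where w: "w 0 = y" "w n \<in> A" "inj_on w {..n}"
      and steps: "\<forall>i<n. (w i, w (Suc i)) \<in> R \<and> w i \<notin> A"
      by blast
    consider "x \<in> A" | "x \<notin> A" "x \<in> w ` {..n}" | "x \<notin> A" "x \<notin> w ` {..n}"
      by blast
    then show ?case
    proof cases
      case 1
      then show ?thesis
        by (intro exI[of _ 0] exI[of _ "\<lambda>_. x"]) auto
    next
      case 2
      then obtain j where "j \<le> n" "w j = x"
        by auto
      \<comment> \<open>cut off the cycle through \<open>x\<close>\<close>
      have "inj_on (\<lambda>i. w (i + j)) {..n - j}"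
      proof (rule inj_onI)
        fix i k assume "i \<in> {..n - j}" "k \<in> {..n - j}" "w (i + j) = w (k + j)"
        then show "i = k"
          using inj_onD[OF \<open>inj_on w {..n}\<close>, of "i + j" "k + j"] \<open>j \<le> n\<close> by auto
      qed
      then show ?thesis
        using w steps \<open>j \<le> n\<close> \<open>w j = x\<close>
        by (intro exI[of _ "n - j"] exI[of _ "\<lambda>i. w (i + j)"]) auto
    next
      case 3
      have "inj_on (case_nat x w) {..Suc n}"
        using \<open>inj_on w {..n}\<close> 3 by (auto simp: inj_on_def split: nat.splits)
      then show ?thesis
        using w steps 3 \<open>(x, y) \<in> R\<close>
        by (intro exI[of _ "Suc n"] exI[of _ "case_nat x w"]) (auto simp: less_Suc_eq_0_disj)
    qed
  qed
  then show thesis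
    using that by blast
qed

locale signed_graph =
  fixes V :: "'a set" and E :: "'a set set" and \<sigma> :: "'a set \<Rightarrow> real"
  assumes simple_graph: "simple_graph V E" and signature: "signature E \<sigma>"
begin

lemma finite_V: "finite V"
  using simple_graph by (simp add: simple_graph_def)

lemma adj_sym: "adj E x y \<longleftrightarrow> adj E y x"
  by (simp add: adj_def insert_commute)

lemma adj_in_V: "adj E x y \<Longrightarrow> x \<in> V \<and> y \<in> V"
  using simple_graph by (auto simp: simple_graph_def adj_def doubleton_eq_iff)

lemma adj_irrefl: "\<not> adj E x x"
  using simple_graph by (auto simp: simple_graph_def adj_def doubleton_eq_iff)

lemma mem_neighbors_iff: "y \<in> neighbors V E x \<longleftrightarrow> adj E x y"
  using adj_in_V by (auto simp: neighbors_def)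

lemma finite_neighbors: "finite (neighbors V E x)"
  using finite_V by (simp add: neighbors_def)

lemma sigma_unit: "adj E x y \<Longrightarrow> \<sigma> {x, y} = 1 \<or> \<sigma> {x, y} = -1"
  using signature by (simp add: signature_def adj_def)

lemma sum_neighbors_swap:
  "(\<Sum>x\<in>V. \<Sum>y\<in>neighbors V E x. F x y) = (\<Sum>x\<in>V. \<Sum>y\<in>neighbors V E x. F y x)"
proof -
  have "(\<Sum>x\<in>V. \<Sum>y\<in>neighbors V E x. F x y) = (\<Sum>y\<in>V. \<Sum>x | x \<in> V \<and> adj E x y. F x y)"
    unfolding neighbors_def by (rule sum.swap_restrict[OF finite_V finite_V])
  also have "\<dots> = (\<Sum>y\<in>V. \<Sum>x\<in>neighbors V E y. F x y)"
    by (simp add: neighbors_def adj_sym)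
  finally show ?thesis .
qed

lemma green_formula:
  assumes antisym: "\<And>x y. adj E x y \<Longrightarrow> F y x = - \<sigma> {x, y} * F x y"
  shows "(\<Sum>x\<in>V. g x * (\<Sum>y\<in>neighbors V E x. F x y))
    = - (1/2) * (\<Sum>x\<in>V. \<Sum>y\<in>neighbors V E x. (\<sigma> {x, y} * g y - g x) * F x y)"
proof -
  have "(\<Sum>x\<in>V. g x * (\<Sum>y\<in>neighbors V E x. F x y)) = (\<Sum>x\<in>V. \<Sum>y\<in>neighbors V E x. g x * F x y)"
    by (simp add: sum_distrib_left)
  moreover have "\<dots> = (\<Sum>x\<in>V. \<Sum>y\<in>neighbors V E x. g y * F y x)"
    by (rule sum_neighbors_swap)
  moreover have "\<dots> = - (\<Sum>x\<in>V. \<Sum>y\<in>neighbors V E x. \<sigma> {x, y} * g y * F x y)"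
    by (simp add: antisym mem_neighbors_iff sum_negf mult_ac)
  ultimately show ?thesis
    by (simp add: left_diff_distrib sum_subtractf)
qed

lemma sum_simple_walk_le:
  fixes h :: "'a \<Rightarrow> 'a \<Rightarrow> real"
  assumes inj: "inj_on w {..L}" and walk: "\<And>i. i < L \<Longrightarrow> adj E (w i) (w (Suc i))"
    and sym: "\<And>x y. adj E x y \<Longrightarrow> h y x = h x y"
    and nonneg: "\<And>x y. adj E x y \<Longrightarrow> 0 \<le> h x y"
  shows "2 * (\<Sum>i<L. h (w i) (w (Suc i))) \<le> (\<Sum>x\<in>V. \<Sum>y\<in>neighbors V E x. h x y)"
proof -
  have w_eq: "i = j" if "w i = w j" "i \<le> L" "j \<le> L" for i j
    using inj_onD[OF inj that(1)] that(2,3) by simp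
  \<comment> \<open>each edge of the walk occurs in the double sum once per orientation\<close>
  define fwd where "fwd = (\<lambda>i. (w i, w (Suc i)))"
  define bwd where "bwd = (\<lambda>i. (w (Suc i), w i))"
  have "inj_on fwd {..<L}" "inj_on bwd {..<L}"
    using w_eq by (auto simp: inj_on_def fwd_def bwd_def)
  have disjoint: "fwd ` {..<L} \<inter> bwd ` {..<L} = {}"
  proof -
    have False if "i < L" "j < L" "w i = w (Suc j)" "w (Suc i) = w j" for i j
      using w_eq[OF that(3)] w_eq[OF that(4)] that(1,2) by simp
    then show ?thesis
      by (auto simp: fwd_def bwd_def)
  qed
  have sub: "fwd ` {..<L} \<union> bwd ` {..<L} \<subseteq> Sigma V (neighbors V E)"
  proof -
    have "adj E (w i) (w (Suc i))" "adj E (w (Suc i)) (w i)" if "i < L" for i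
      using walk[OF that] adj_sym by blast+
    then show ?thesis
      by (auto simp: fwd_def bwd_def mem_neighbors_iff dest: adj_in_V)
  qed
  have "(\<Sum>i<L. h (w (Suc i)) (w i)) = (\<Sum>i<L. h (w i) (w (Suc i)))"
    by (rule sum.cong[OF refl]) (simp add: sym walk)
  then have "2 * (\<Sum>i<L. h (w i) (w (Suc i)))
      = sum (case_prod h) (fwd ` {..<L}) + sum (case_prod h) (bwd ` {..<L})"
    using \<open>inj_on fwd {..<L}\<close> \<open>inj_on bwd {..<L}\<close> by (simp add: sum.reindex fwd_def bwd_def)
  also have "\<dots> = sum (case_prod h) (fwd ` {..<L} \<union> bwd ` {..<L})"
    using disjoint by (simp add: sum.union_disjoint)
  also have "\<dots> \<le> sum (case_prod h) (Sigma V (neighbors V E))"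
    by (rule sum_mono2[OF _ sub]) (auto simp: finite_V finite_neighbors mem_neighbors_iff nonneg)
  also have "\<dots> = (\<Sum>x\<in>V. \<Sum>y\<in>neighbors V E x. h x y)"
    by (simp add: sum.Sigma finite_V finite_neighbors)
  finally show ?thesis .
qed

lemma simple_walk_length_le_vol:
  assumes "inj_on w {..L}" and "\<And>i. i < L \<Longrightarrow> adj E (w i) (w (Suc i))"
  shows "2 * real L \<le> vol V E"
  using sum_simple_walk_le[OF assms, of "\<lambda>_ _. 1::real"] by (simp add: vol_def degree_def)

lemma abs_le_sum_abs_signed_diff:
  assumes walk: "\<And>i. i \<le> n \<Longrightarrow> adj E (w i) (w (Suc i))"
    and sign_change: "\<sigma> {w n, w (Suc n)} * f (w n) * f (w (Suc n)) \<le> 0"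
  shows "\<bar>f (w 0)\<bar> \<le> (\<Sum>i\<le>n. \<bar>\<sigma> {w i, w (Suc i)} * f (w (Suc i)) - f (w i)\<bar>)"
proof -
  let ?D = "\<lambda>i. \<bar>\<sigma> {w i, w (Suc i)} * f (w (Suc i)) - f (w i)\<bar>"
  have step: "\<bar>f (w i)\<bar> - \<bar>f (w (Suc i))\<bar> \<le> ?D i" if "i \<le> n" for i
    using sigma_unit[OF walk[OF that]] by (auto simp: abs_if)
  have "(\<sigma> {w n, w (Suc n)} * f (w (Suc n))) * f (w n) \<le> 0"
    using sign_change by (simp only: mult_ac)
  then have last: "\<bar>f (w n)\<bar> \<le> ?D n"
    using mult_le_0_iff[of "\<sigma> {w n, w (Suc n)} * f (w (Suc n))" "f (w n)"] by linarith
  have "\<bar>f (w 0)\<bar> = (\<Sum>i<n. \<bar>f (w i)\<bar> - \<bar>f (w (Suc i))\<bar>) + \<bar>f (w n)\<bar>"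
    using sum_lessThan_telescope'[of "\<lambda>i. \<bar>f (w i)\<bar>" n] by simp
  also have "\<dots> \<le> (\<Sum>i<n. ?D i) + ?D n"
    using step last by (intro add_mono sum_mono) auto
  also have "\<dots> = (\<Sum>i\<le>n. ?D i)"
    by (simp add: lessThan_Suc_atMost[symmetric])
  finally show ?thesis .
qed

lemma simple_walk_to_edge:
  assumes "connected_graph V E" "x \<in> V" "adj E a b" "P a b"
    and P_sym: "\<And>u v. P u v \<Longrightarrow> P v u"
  obtains n w where "w 0 = x" "inj_on w {..Suc n}" "\<And>i. i \<le> n \<Longrightarrow> adj E (w i) (w (Suc i))"
    "P (w n) (w (Suc n))"
proof -
  define A where "A = {u. \<exists>v. adj E u v \<and> P u v}"
  have walk_to_a: "(x, a) \<in> {(u, v). u \<in> V \<and> v \<in> V \<and> adj E u v}\<^sup>*"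
    using assms(1,2) adj_in_V[OF assms(3)] unfolding connected_graph_def by blast
  have "a \<in> A"
    using assms(3,4) by (auto simp: A_def)
  obtain w n where w: "w 0 = x" "w n \<in> A" "inj_on w {..n}"
    and steps: "\<And>i. i < n \<Longrightarrow> (w i, w (Suc i)) \<in> {(u, v). u \<in> V \<and> v \<in> V \<and> adj E u v}"
      "\<And>i. i < n \<Longrightarrow> w i \<notin> A"
    using rtrancl_imp_simple_path_to_set[OF walk_to_a \<open>a \<in> A\<close>] by blast
  obtain b' where b': "adj E (w n) b'" "P (w n) b'"
    using w(2) by (auto simp: A_def)
  then have "b' \<in> A"
    unfolding A_def using adj_sym P_sym by blast
  have b'_new: "b' \<noteq> w i" if "i \<le> n" for i
  proof (cases "i = n")
    case True
    then show ?thesis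
      using b'(1) adj_irrefl by auto
  next
    case False
    then show ?thesis
      using steps that \<open>b' \<in> A\<close> by auto
  qed
  show thesis
  proof (rule that[of "w(Suc n := b')" n])
    have "inj_on (w(Suc n := b')) {..n}"
      using w(3) by (simp add: inj_on_def)
    then show "inj_on (w(Suc n := b')) {..Suc n}"
      using b'_new by (auto simp: atMost_Suc)
    show "adj E ((w(Suc n := b')) i) ((w(Suc n := b')) (Suc i))" if "i \<le> n" for i
      using that steps b'(1) by (cases "i = n") auto
  qed (use w b' in auto)
qed

end

locale signed_eigenfunction = signed_graph +
  fixes p :: real and f :: "'a \<Rightarrow> real" and lam :: real
  assumes eigen_equation: "\<And>x. x \<in> V \<Longrightarrow> - signed_p_laplacian p V E \<sigma> f x = lam * phi p (f x)"
begin

abbreviation grad :: "'a \<Rightarrow> 'a \<Rightarrow> real" where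
  "grad x y \<equiv> \<sigma> {x, y} * f y - f x"

lemma grad_swap: "adj E x y \<Longrightarrow> grad y x = - \<sigma> {x, y} * grad x y"
  using sigma_unit[of x y] by (auto simp: insert_commute algebra_simps)

lemma phi_grad_swap:
  assumes "adj E x y"
  shows "phi p (grad y x) = - \<sigma> {x, y} * phi p (grad x y)"
proof -
  have "phi p (- \<sigma> {x, y} * t) = - \<sigma> {x, y} * phi p t" for t
    using sigma_unit[OF assms] by (auto simp: phi_minus)
  then show ?thesis
    unfolding grad_swap[OF assms] .
qed

lemma abs_grad_swap: "adj E x y \<Longrightarrow> \<bar>grad y x\<bar> = \<bar>grad x y\<bar>"
  using sigma_unit[of x y] by (auto simp: grad_swap)

lemma sum_phi_grad:
  assumes "x \<in> V"
  shows "(\<Sum>y\<in>neighbors V E x. phi p (grad x y)) = - lam * real (degree V E x) * phi p (f x)"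
proof (cases "degree V E x = 0")
  case True
  then have "neighbors V E x = {}"
    using finite_neighbors by (simp add: degree_def)
  then show ?thesis
    using True by simp
next
  case False
  then show ?thesis
    using eigen_equation[OF assms] by (simp add: signed_p_laplacian_def field_simps)
qed

lemma degree_pos:
  assumes "lam \<noteq> 0" "x \<in> V" "f x \<noteq> 0"
  shows "0 < degree V E x"
proof (rule ccontr)
  assume "\<not> 0 < degree V E x"
  then show False
    using eigen_equation[OF assms(2)] assms(1,3) by (simp add: signed_p_laplacian_def phi_eq_0_iff)
qed

lemma eigen_equation_weak:
  "lam * (\<Sum>x\<in>V. real (degree V E x) * g x * phi p (f x))
    = (1/2) * (\<Sum>x\<in>V. \<Sum>y\<in>neighbors V E x. (\<sigma> {x, y} * g y - g x) * phi p (grad x y))"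
proof -
  have "(\<Sum>x\<in>V. g x * (\<Sum>y\<in>neighbors V E x. phi p (grad x y)))
      = (\<Sum>x\<in>V. - lam * (real (degree V E x) * g x * phi p (f x)))"
  proof (rule sum.cong[OF refl])
    fix x assume "x \<in> V"
    show "g x * (\<Sum>y\<in>neighbors V E x. phi p (grad x y)) = - lam * (real (degree V E x) * g x * phi p (f x))"
      unfolding sum_phi_grad[OF \<open>x \<in> V\<close>] by (simp add: mult_ac)
  qed
  also have "\<dots> = - lam * (\<Sum>x\<in>V. real (degree V E x) * g x * phi p (f x))"
    by (simp add: sum_distrib_left)
  finally have "(\<Sum>x\<in>V. g x * (\<Sum>y\<in>neighbors V E x. phi p (grad x y)))
      = - lam * (\<Sum>x\<in>V. real (degree V E x) * g x * phi p (f x))" .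
  moreover have "(\<Sum>x\<in>V. g x * (\<Sum>y\<in>neighbors V E x. phi p (grad x y)))
      = - (1/2) * (\<Sum>x\<in>V. \<Sum>y\<in>neighbors V E x. (\<sigma> {x, y} * g y - g x) * phi p (grad x y))"
    by (rule green_formula) (rule phi_grad_swap)
  ultimately show ?thesis
    by simp
qed

lemma energy_identity:
  "lam * (\<Sum>x\<in>V. real (degree V E x) * \<bar>f x\<bar> powr p)
    = (1/2) * (\<Sum>x\<in>V. \<Sum>y\<in>neighbors V E x. \<bar>grad x y\<bar> powr p)"
  using eigen_equation_weak[of f] by (simp add: mult_phi_self mult.assoc)

lemma exists_sign_changing_edge:
  assumes "lam \<noteq> 0" "x \<in> V" "f x \<noteq> 0"
  shows "\<exists>a b. adj E a b \<and> \<sigma> {a, b} * f a * f b \<le> 0"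
proof (rule ccontr)
  assume "\<not> ?thesis"
  then have pos: "0 < \<sigma> {a, b} * f a * f b" if "adj E a b" for a b
    using that by force
  have "\<sigma> {a, b} * sgn (f b) - sgn (f a) = 0" if "adj E a b" for a b
    using sigma_unit[OF that] pos[OF that] by (auto simp: sgn_if zero_less_mult_iff)
  then have "lam * (\<Sum>x\<in>V. real (degree V E x) * sgn (f x) * phi p (f x)) = 0"
    by (simp add: eigen_equation_weak mem_neighbors_iff)
  moreover have "0 < (\<Sum>x\<in>V. real (degree V E x) * sgn (f x) * phi p (f x))"
    unfolding mult.assoc sgn_mult_phi
    using assms degree_pos by (intro sum_pos2[OF finite_V \<open>x \<in> V\<close>]) auto
  ultimately show False
    using \<open>lam \<noteq> 0\<close> by simp
qed

lemma abs_powr_le_walk_length_energy: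
  assumes "connected_graph V E" "1 \<le> p" "lam \<noteq> 0" "x \<in> V" "f x \<noteq> 0"
  obtains L :: nat where "1 \<le> L" "2 * real L \<le> vol V E"
    "\<bar>f x\<bar> powr p \<le> real L powr (p - 1) * (lam * (\<Sum>y\<in>V. real (degree V E y) * \<bar>f y\<bar> powr p))"
proof -
  obtain a b where "adj E a b" "\<sigma> {a, b} * f a * f b \<le> 0"
    using exists_sign_changing_edge assms(3-5) by blast
  moreover have "\<sigma> {v, u} * f v * f u \<le> 0" if "\<sigma> {u, v} * f u * f v \<le> 0" for u v
    using that by (simp add: insert_commute mult_ac)
  ultimately obtain w n where w: "w 0 = x" "inj_on w {..Suc n}"
    and walk: "\<And>i. i \<le> n \<Longrightarrow> adj E (w i) (w (Suc i))"
    and sign_change: "\<sigma> {w n, w (Suc n)} * f (w n) * f (w (Suc n)) \<le> 0"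
    using simple_walk_to_edge[OF assms(1,4), of a b "\<lambda>u v. \<sigma> {u, v} * f u * f v \<le> 0"] by blast
  have walk': "adj E (w i) (w (Suc i))" if "i < Suc n" for i
    using walk that by simp
  have "\<bar>f x\<bar> \<le> (\<Sum>i\<le>n. \<bar>grad (w i) (w (Suc i))\<bar>)"
    using abs_le_sum_abs_signed_diff[OF walk sign_change] w(1) by simp
  then have "\<bar>f x\<bar> powr p \<le> (\<Sum>i\<le>n. \<bar>grad (w i) (w (Suc i))\<bar>) powr p"
    using \<open>1 \<le> p\<close> by (intro powr_mono2) auto
  also have "\<dots> \<le> real (Suc n) powr (p - 1) * (\<Sum>i\<le>n. \<bar>grad (w i) (w (Suc i))\<bar> powr p)"
    using sum_powr_le_card_powr_sum[of "{..n}" "\<lambda>i. \<bar>grad (w i) (w (Suc i))\<bar>" p] \<open>1 \<le> p\<close> by simp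
  also have "(\<Sum>i\<le>n. \<bar>grad (w i) (w (Suc i))\<bar> powr p)
      \<le> lam * (\<Sum>y\<in>V. real (degree V E y) * \<bar>f y\<bar> powr p)"
    using sum_simple_walk_le[OF w(2) walk', of "\<lambda>x y. \<bar>grad x y\<bar> powr p"]
    by (simp add: abs_grad_swap energy_identity lessThan_Suc_atMost)
  finally show thesis
    using simple_walk_length_le_vol[OF w(2) walk'] by (intro that[of "Suc n"]) (auto simp: mult_left_mono)
qed

lemma eigenvalue_lower_bound:
  assumes "connected_graph V E" "1 \<le> p" "lam \<noteq> 0" "\<exists>x\<in>V. f x \<noteq> 0"
  shows "(1/2) * (2 / vol V E) powr p \<le> lam"
proof -
  obtain x0 where "x0 \<in> V" and "Max ((\<lambda>x. \<bar>f x\<bar>) ` V) = \<bar>f x0\<bar>"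
    using obtains_MAX[OF finite_V] assms(4) by blast
  then have max: "\<bar>f x\<bar> \<le> \<bar>f x0\<bar>" if "x \<in> V" for x
    using that finite_V by (metis Max_ge finite_imageI imageI)
  then have "f x0 \<noteq> 0"
    using assms(4) by force
  define K where "K = \<bar>f x0\<bar> powr p"
  define D where "D = (\<Sum>x\<in>V. real (degree V E x) * \<bar>f x\<bar> powr p)"
  define v where "v = vol V E"
  obtain L where "1 \<le> L" "2 * real L \<le> v" and K_le: "K \<le> real L powr (p - 1) * (lam * D)"
    using abs_powr_le_walk_length_energy[OF assms(1-3) \<open>x0 \<in> V\<close> \<open>f x0 \<noteq> 0\<close>]
    unfolding K_def D_def v_def by blast
  have "0 < K" "0 \<le> D" "0 < v"
    using \<open>f x0 \<noteq> 0\<close> \<open>1 \<le> L\<close> \<open>2 * real L \<le> v\<close> by (auto simp: K_def D_def intro: sum_nonneg)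
  have D_le: "D \<le> v * K"
    unfolding D_def K_def v_def vol_def sum_distrib_right
    using \<open>1 \<le> p\<close> max by (intro sum_mono mult_left_mono powr_mono2) auto
  have "0 < lam * D"
  proof (rule ccontr)
    assume "\<not> 0 < lam * D"
    then have "real L powr (p - 1) * (lam * D) \<le> 0"
      by (simp add: mult_nonneg_nonpos)
    then show False
      using K_le \<open>0 < K\<close> by linarith
  qed
  then have "0 < lam"
    using \<open>0 \<le> D\<close> by (simp add: zero_less_mult_iff)
  have "K \<le> real L powr (p - 1) * (lam * D)"
    by (fact K_le)
  also have "\<dots> \<le> (v / 2) powr (p - 1) * (lam * D)"
    using \<open>2 * real L \<le> v\<close> \<open>1 \<le> p\<close> \<open>0 < lam * D\<close> by (intro mult_right_mono powr_mono2) auto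
  also have "\<dots> \<le> (v / 2) powr (p - 1) * (lam * (v * K))"
    using D_le \<open>0 < lam\<close> by (intro mult_left_mono) auto
  finally have "1 \<le> (v / 2) powr (p - 1) * v * lam"
    using \<open>0 < K\<close> by (simp add: mult_ac)
  also have "(v / 2) powr (p - 1) * v = 2 * (v / 2) powr p"
    using \<open>0 < v\<close> by (simp add: powr_diff)
  finally have "1 / (2 * (v / 2) powr p) \<le> lam"
    using \<open>0 < v\<close> by (simp add: field_simps)
  moreover have "(2 / v) powr p = 1 / (v / 2) powr p"
    using powr_divide[of 1 "v / 2" p] \<open>0 < v\<close> by simp
  ultimately show ?thesis
    by (simp add: v_def)
qed

end

theorem theorem4p3:
  fixes V :: "'a set" and E :: "'a set set" and \<sigma> :: "'a set \<Rightarrow> real" and p :: real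
  assumes "simple_graph V E" and "connected_graph V E" and "signature E \<sigma>" and "p > 1"
  shows "\<forall>lam::real. is_eigenvalue p V E \<sigma> lam \<and> lam \<noteq> 0 \<longrightarrow>
           lam \<ge> (1/2) * (2 / (p * vol V E)) powr p"
proof (intro allI impI)
  fix lam
  assume "is_eigenvalue p V E \<sigma> lam \<and> lam \<noteq> 0"
  then obtain f where "\<exists>x\<in>V. f x \<noteq> 0" "lam \<noteq> 0"
    and eigen: "\<forall>x\<in>V. - signed_p_laplacian p V E \<sigma> f x = lam * phi p (f x)"
    unfolding is_eigenvalue_def by blast
  interpret signed_eigenfunction V E \<sigma> p f lam
    using assms(1,3) eigen by unfold_locales auto
  have lower_bound: "(1/2) * (2 / vol V E) powr p \<le> lam"
    using eigenvalue_lower_bound assms(2,4) \<open>lam \<noteq> 0\<close> \<open>\<exists>x\<in>V. f x \<noteq> 0\<close> by simp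
  have "0 \<le> vol V E"
    by (simp add: vol_def sum_nonneg)
  then have "2 / (p * vol V E) \<le> 2 / vol V E"
    using \<open>p > 1\<close> by (cases "vol V E = 0") (auto intro!: frac_le simp: mult_le_cancel_right1)
  then have "(2 / (p * vol V E)) powr p \<le> (2 / vol V E) powr p"
    using \<open>p > 1\<close> \<open>0 \<le> vol V E\<close> by (intro powr_mono2) auto
  with lower_bound show "lam \<ge> (1/2) * (2 / (p * vol V E)) powr p"
    by linarith
qed

end
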